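(* Let $k\in\mathbb{Z}^+$, let $1<\gamma<k$, and let $(a_n)_{n=1}^\infty$ be a sequence of non-negative real numbers such that for all $n,m\in\mathbb{Z}^+$: (i) $a_{n+m}\leq a_na_m$, and (ii) $a_{kn}\leq a_n^{\gamma}$. Then for every $\tau>\log_k(\gamma)$ one has $a_n=O(e^{n^\tau})$ as $n\to\infty$. *)

theory Defs
  imports "HOL-Analysis.Analysis" "HOL-Library.Landau_Symbols"
begin

end

theory Submission
  imports Defs "HOL-Real_Asymp.Real_Asymp"
begin

(* With \<alpha> = log k \<gamma> and B bounding a on [1, k), strong induction along n = k q + r
   (0 \<le> r < k) gives a n \<le> B powr f n for f n = (\<gamma> n^\<alpha> - 1) / (\<gamma> - 1): the dilation
   bound turns B powr f q into B powr (\<gamma> f q), the factor a r costs one more power of B,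
   and f is chosen exactly so that \<gamma> f q + 1 = f (k q).  Since B powr f n grows like
   exp (C n^\<alpha>), it is O(exp (n^\<tau>)) for every \<tau> > \<alpha>. *)

lemma submultiplicative_le_powr_by_dilation:
  fixes a f :: "nat \<Rightarrow> real" and k :: nat and \<gamma> B :: real
  assumes "k \<ge> 2" and "\<gamma> \<ge> 0" and "B \<ge> 1"
    and nonneg: "\<And>n. n \<ge> 1 \<Longrightarrow> a n \<ge> 0"
    and submult: "\<And>n m. n \<ge> 1 \<Longrightarrow> m \<ge> 1 \<Longrightarrow> a (n + m) \<le> a n * a m"
    and dilation: "\<And>n. n \<ge> 1 \<Longrightarrow> a (k * n) \<le> a n powr \<gamma>"
    and initial: "\<And>n. 1 \<le> n \<Longrightarrow> n < k \<Longrightarrow> a n \<le> B"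
    and f_initial: "\<And>n. 1 \<le> n \<Longrightarrow> n < k \<Longrightarrow> 1 \<le> f n"
    and f_mono: "mono f"
    and f_dilation: "\<And>n. n \<ge> 1 \<Longrightarrow> \<gamma> * f n + 1 \<le> f (k * n)"
    and "n \<ge> 1"
  shows "a n \<le> B powr f n"
  using \<open>n \<ge> 1\<close>
proof (induction n rule: less_induct)
  case (less n)
  show ?case
  proof (cases "n < k")
    case True
    have "a n \<le> B powr 1"
      using initial[OF less.prems True] \<open>B \<ge> 1\<close> by simp
    also have "\<dots> \<le> B powr f n"
      using f_initial[OF less.prems True] \<open>B \<ge> 1\<close> by (rule powr_mono)
    finally show ?thesis .
  next
    case False
    define q where "q = n div k"
    define r where "r = n mod k"
    have n_eq: "n = k * q + r"
      unfolding q_def r_def by simp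
    have "q \<ge> 1" "q < n"
      using False less.prems \<open>k \<ge> 2\<close> by (auto simp: q_def Suc_le_eq div_greater_zero_iff)
    have "a (k * q) \<le> a q powr \<gamma>"
      using dilation[OF \<open>q \<ge> 1\<close>] .
    also have "\<dots> \<le> (B powr f q) powr \<gamma>"
      using less.IH[OF \<open>q < n\<close> \<open>q \<ge> 1\<close>] nonneg[OF \<open>q \<ge> 1\<close>] \<open>\<gamma> \<ge> 0\<close>
      by (intro powr_mono2) auto
    finally have a_kq: "a (k * q) \<le> B powr (\<gamma> * f q)"
      by (simp add: powr_powr mult.commute)
    have "a n \<le> B powr (\<gamma> * f q + 1)"
    proof (cases "r = 0")
      case True
      have "B powr (\<gamma> * f q) \<le> B powr (\<gamma> * f q + 1)"
        using \<open>B \<ge> 1\<close> by (intro powr_mono) auto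
      then show ?thesis
        using a_kq True n_eq by simp
    next
      case False
      have "r \<ge> 1" "r < k"
        using False \<open>k \<ge> 2\<close> by (auto simp: r_def)
      have "a n \<le> a (k * q) * a r"
        using submult[of "k * q" r] \<open>q \<ge> 1\<close> \<open>k \<ge> 2\<close> \<open>r \<ge> 1\<close> n_eq by simp
      also have "\<dots> \<le> B powr (\<gamma> * f q) * B powr 1"
        using a_kq initial[OF \<open>r \<ge> 1\<close> \<open>r < k\<close>] nonneg[OF \<open>r \<ge> 1\<close>] \<open>B \<ge> 1\<close>
        by (intro mult_mono) auto
      finally show ?thesis
        by (simp add: powr_add)
    qed
    also have "\<dots> \<le> B powr f (k * q)"
      using f_dilation[OF \<open>q \<ge> 1\<close>] \<open>B \<ge> 1\<close> by (rule powr_mono)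
    also have "\<dots> \<le> B powr f n"
      using monoD[OF f_mono, of "k * q" n] n_eq \<open>B \<ge> 1\<close> by (intro powr_mono) auto
    finally show ?thesis .
  qed
qed

lemma submultiplicative_dilation_exp_bound:
  fixes a :: "nat \<Rightarrow> real" and k :: nat and \<gamma> :: real
  assumes "k \<ge> 2" and "\<gamma> > 1"
    and nonneg: "\<And>n. n \<ge> 1 \<Longrightarrow> a n \<ge> 0"
    and submult: "\<And>n m. n \<ge> 1 \<Longrightarrow> m \<ge> 1 \<Longrightarrow> a (n + m) \<le> a n * a m"
    and dilation: "\<And>n. n \<ge> 1 \<Longrightarrow> a (k * n) \<le> a n powr \<gamma>"
  obtains C where "\<And>n. n \<ge> 1 \<Longrightarrow> a n \<le> exp (C * real n powr log k \<gamma>)"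
proof -
  define \<alpha> where "\<alpha> = log k \<gamma>"
  define f where "f n = (\<gamma> * real n powr \<alpha> - 1) / (\<gamma> - 1)" for n
  define B where "B = max 1 (Max (a ` {1..<k}))"
  have "\<alpha> > 0" "real k powr \<alpha> = \<gamma>"
    using \<open>k \<ge> 2\<close> \<open>\<gamma> > 1\<close> by (simp_all add: \<alpha>_def)
  have "B \<ge> 1"
    by (simp add: B_def)
  have bound: "a n \<le> B powr f n" if "n \<ge> 1" for n
  proof (rule submultiplicative_le_powr_by_dilation
      [OF \<open>k \<ge> 2\<close> _ \<open>B \<ge> 1\<close> nonneg submult dilation _ _ _ _ that])
    show "a m \<le> B" if "1 \<le> m" "m < k" for m
      using that by (auto simp: B_def intro!: Max_ge le_max_iff_disj[THEN iffD2])
    show "1 \<le> f m" if "1 \<le> m" for m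
      using that \<open>\<alpha> > 0\<close> \<open>\<gamma> > 1\<close> ge_one_powr_ge_zero[of "real m" \<alpha>]
      by (simp add: f_def field_simps)
    show "mono f"
    proof (rule monoI)
      fix m n :: nat
      assume "m \<le> n"
      then have "real m powr \<alpha> \<le> real n powr \<alpha>"
        using \<open>\<alpha> > 0\<close> by (intro powr_mono2) auto
      then show "f m \<le> f n"
        using \<open>\<gamma> > 1\<close> by (simp add: f_def divide_right_mono)
    qed
    show "\<gamma> * f m + 1 \<le> f (k * m)" for m
      using \<open>\<gamma> > 1\<close> \<open>real k powr \<alpha> = \<gamma>\<close>
      by (simp add: f_def powr_mult field_simps)
  qed (use \<open>\<gamma> > 1\<close> in simp)
  show thesis
  proof (rule that[of "ln B * \<gamma> / (\<gamma> - 1)"])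
    fix n :: nat
    assume "n \<ge> 1"
    have "f n \<le> \<gamma> / (\<gamma> - 1) * real n powr \<alpha>"
      using \<open>\<gamma> > 1\<close> by (simp add: f_def field_simps)
    then have exponent: "ln B * f n \<le> ln B * (\<gamma> / (\<gamma> - 1) * real n powr \<alpha>)"
      using \<open>B \<ge> 1\<close> by (intro mult_left_mono) auto
    have "a n \<le> B powr f n"
      using bound[OF \<open>n \<ge> 1\<close>] .
    also have "\<dots> = exp (ln B * f n)"
      using \<open>B \<ge> 1\<close> by (simp add: powr_def mult.commute)
    also have "\<dots> \<le> exp (ln B * \<gamma> / (\<gamma> - 1) * real n powr \<alpha>)"
      using exponent by (simp add: mult.assoc)
    finally show "a n \<le> exp (ln B * \<gamma> / (\<gamma> - 1) * real n powr log k \<gamma>)"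
      unfolding \<alpha>_def .
  qed
qed

lemma exp_powr_bigo_exp_powr:
  fixes C \<alpha> \<tau> :: real
  assumes "\<alpha> < \<tau>"
  shows "(\<lambda>n::nat. exp (C * real n powr \<alpha>)) \<in> O(\<lambda>n. exp (real n powr \<tau>))"
proof (rule landau_o.big_mono)
  have "eventually (\<lambda>n::nat. C * real n powr \<alpha> \<le> real n powr \<tau>) sequentially"
    using assms by real_asymp
  then show "eventually (\<lambda>n::nat. norm (exp (C * real n powr \<alpha>))
      \<le> norm (exp (real n powr \<tau>))) sequentially"
    by eventually_elim simp
qed

theorem lemma3p4:
  fixes k :: nat and \<gamma> :: real and a :: "nat \<Rightarrow> real"
  assumes "k \<ge> 1"
    and "1 < \<gamma>" and "\<gamma> < real k"
    and "\<And>n. n \<ge> 1 \<Longrightarrow> a n \<ge> 0"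
    and "\<And>n m. n \<ge> 1 \<Longrightarrow> m \<ge> 1 \<Longrightarrow> a (n + m) \<le> a n * a m"
    and "\<And>n. n \<ge> 1 \<Longrightarrow> a (k * n) \<le> a n powr \<gamma>"
  shows "\<forall>\<tau>::real. \<tau> > log (real k) \<gamma> \<longrightarrow>
           a \<in> O[sequentially](\<lambda>n. exp (real n powr \<tau>))"
proof (intro allI impI)
  fix \<tau> :: real
  assume "\<tau> > log (real k) \<gamma>"
  have "k \<ge> 2"
    using assms(2,3) by linarith
  obtain C where bound: "\<And>n. n \<ge> 1 \<Longrightarrow> a n \<le> exp (C * real n powr log k \<gamma>)"
    using submultiplicative_dilation_exp_bound[OF \<open>k \<ge> 2\<close> assms(2,4-6)] by blast
  have "a \<in> O(\<lambda>n. exp (C * real n powr log k \<gamma>))"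
  proof (rule landau_o.big_mono)
    show "eventually (\<lambda>n. norm (a n) \<le> norm (exp (C * real n powr log k \<gamma>))) sequentially"
      using eventually_ge_at_top[of "1::nat"] by eventually_elim (simp add: bound assms(4))
  qed
  also have "(\<lambda>n. exp (C * real n powr log k \<gamma>)) \<in> O(\<lambda>n. exp (real n powr \<tau>))"
    using \<open>\<tau> > log k \<gamma>\<close> by (rule exp_powr_bigo_exp_powr)
  finally show "a \<in> O(\<lambda>n. exp (real n powr \<tau>))" .
qed

end
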